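(* Let $\mathcal N$ be a feed-forward ReLU network with $d$ hidden layers. For all $\theta$ outside a Lebesgue-null subset of $\mathbb R^{\#\mathrm{params}}$: (i) for every neuron $z$ of the first hidden layer, $H_z(\theta)$ is an affine hyperplane in $\mathbb R^{n_{\mathrm{in}}}$; (ii) for every $2\le j\le d$, every neuron $z$ in layer $j$, and every activation region $\mathcal R$ of $\mathcal N_{j-1}$ at $\theta_{j-1}$, the set $H_z(\theta)\cap\mathcal R$ is either empty or equal to $P\cap\mathcal R$ for a single affine hyperplane $P\subset\mathbb R^{n_{\mathrm{in}}}$.
   Context: A feed-forward ReLU network $\mathcal N$ with input dimension $n_{\mathrm{in}}$ has hidden layers $1,\dots,d$; edges only between consecutive layers (arbitrary connectivity, no tied weights). A neuron $z$ in layer $1$ has pre-activation $z(x;\theta)=\sum_i w_{z,i}x_i$; a neuron $z$ in layer $\ell\ge2$ has pre-activation $z(x;\theta)=\sum_{z'}w_{z,z'}\max\{0,z'(x;\theta)-b_{z'}\}$ over neurons $z'$ of layer $\ell-1$ joined to $z$; $b_z$ is its bias. $\theta$ is the vector of all weights and biases. $H_z(\theta)=\{x:z(x;\theta)=b_z\}$. For $1\le j\le d$, $\mathcal N_j$ is the network consisting of the first $j$ hidden layers of $\mathcal N$ and $\theta_j$ the corresponding parameters. An activation region of $\mathcal N_{j}$ at $\theta_{j}$ is a non-empty set of the form $\{x:\ \mathrm{sgn}(z(x;\theta)-b_z)=a_z\text{ for every neuron }z\text{ in layers }1,\dots,j\}$ for some choice of signs $a_z\in\{-1,1\}$. *)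

theory Defs
  imports "HOL-Analysis.Analysis"
begin

text \<open>Architecture: hidden layers 1..d; layer l has neurons 0..<width l.
  Layer-1 neurons read all inputs (coordinates of type 'i).
  conn l k k' (l >= 2): neuron k of layer l is joined to neuron k' of layer l-1.
  Parameters: W1 k i (first-layer weight), W l k k' (weight of edge), B l k (bias).\<close>

datatype 'i param = W1 nat 'i | W nat nat nat | B nat nat

definition params :: "'i itself \<Rightarrow> nat \<Rightarrow> (nat \<Rightarrow> nat) \<Rightarrow> (nat \<Rightarrow> nat \<Rightarrow> nat \<Rightarrow> bool) \<Rightarrow> 'i param set" where
  "params _ d width conn =
     {W1 k i | k i. 1 \<le> d \<and> k < width 1}
   \<union> {W l k k' | l k k'. 2 \<le> l \<and> l \<le> d \<and> k < width l \<and> k' < width (l - 1) \<and> conn l k k'}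
   \<union> {B l k | l k. 1 \<le> l \<and> l \<le> d \<and> k < width l}"

fun preact :: "(nat \<Rightarrow> nat) \<Rightarrow> (nat \<Rightarrow> nat \<Rightarrow> nat \<Rightarrow> bool) \<Rightarrow> ('i::finite param \<Rightarrow> real)
    \<Rightarrow> nat \<Rightarrow> nat \<Rightarrow> real^'i \<Rightarrow> real" where
  "preact width conn \<theta> 0 k x = 0"
| "preact width conn \<theta> (Suc 0) k x = (\<Sum>i\<in>UNIV. \<theta> (W1 k i) * x $ i)"
| "preact width conn \<theta> (Suc (Suc l)) k x =
     (\<Sum>k'\<in>{k'. k' < width (Suc l) \<and> conn (Suc (Suc l)) k k'}.
        \<theta> (W (Suc (Suc l)) k k') * max 0 (preact width conn \<theta> (Suc l) k' x - \<theta> (B (Suc l) k')))"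

definition Hz :: "(nat \<Rightarrow> nat) \<Rightarrow> (nat \<Rightarrow> nat \<Rightarrow> nat \<Rightarrow> bool) \<Rightarrow> ('i::finite param \<Rightarrow> real)
    \<Rightarrow> nat \<Rightarrow> nat \<Rightarrow> (real^'i) set" where
  "Hz width conn \<theta> l k = {x. preact width conn \<theta> l k x = \<theta> (B l k)}"

definition act_region :: "(nat \<Rightarrow> nat) \<Rightarrow> (nat \<Rightarrow> nat \<Rightarrow> nat \<Rightarrow> bool) \<Rightarrow> ('i::finite param \<Rightarrow> real)
    \<Rightarrow> nat \<Rightarrow> (real^'i) set \<Rightarrow> bool" where
  "act_region width conn \<theta> j R \<longleftrightarrow> R \<noteq> {} \<and>
     (\<exists>a :: nat \<Rightarrow> nat \<Rightarrow> real. (\<forall>l k. a l k \<in> {-1, 1}) \<and>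
        R = {x. \<forall>l k. 1 \<le> l \<and> l \<le> j \<and> k < width l \<longrightarrow>
                 sgn (preact width conn \<theta> l k x - \<theta> (B l k)) = a l k})"

definition affine_hyperplane :: "(real^'i) set \<Rightarrow> bool" where
  "affine_hyperplane P \<longleftrightarrow> (\<exists>a b. a \<noteq> 0 \<and> P = {x. a \<bullet> x = b})"

end

theory Submission imports Defs begin

text \<open>Fix the set \<open>S\<close> of neurons that are active, i.e.\ pass their value through the ReLU.
  Then every pre-activation is an affine function \<open>x \<mapsto> w \<bullet> x + c\<close> of the input, whose
  slope \<open>w\<close> and offset \<open>c\<close> are polynomials in the parameters; crucially \<open>c\<close> does not
  involve the neuron's own bias. On an activation region \<open>H\<^sub>z\<close> is therefore the level set
  \<open>w \<bullet> x = b\<^sub>z - c\<close> of an affine map, which is a hyperplane unless \<open>w = 0\<close>. In that case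
  \<open>H\<^sub>z\<close> meets the region only if \<open>b\<^sub>z = c\<close>, and this equation, being the graph of a
  function of the remaining parameters, describes a null set. Similarly a first-layer
  neuron fails to define a hyperplane only on the null set where its weight vector vanishes.\<close>

fun preact_lin :: "(nat \<Rightarrow> nat) \<Rightarrow> (nat \<Rightarrow> nat \<Rightarrow> nat \<Rightarrow> bool) \<Rightarrow> ('i::finite param \<Rightarrow> real)
    \<Rightarrow> (nat \<times> nat) set \<Rightarrow> nat \<Rightarrow> nat \<Rightarrow> real^'i" where
  "preact_lin width conn \<theta> S 0 k = 0"
| "preact_lin width conn \<theta> S (Suc 0) k = (\<chi> i. \<theta> (W1 k i))"
| "preact_lin width conn \<theta> S (Suc (Suc l)) k =
     (\<Sum>k'\<in>{k'. k' < width (Suc l) \<and> conn (Suc (Suc l)) k k'}.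
        \<theta> (W (Suc (Suc l)) k k') *\<^sub>R
          (if (Suc l, k') \<in> S then preact_lin width conn \<theta> S (Suc l) k' else 0))"

fun preact_const :: "(nat \<Rightarrow> nat) \<Rightarrow> (nat \<Rightarrow> nat \<Rightarrow> nat \<Rightarrow> bool) \<Rightarrow> ('i::finite param \<Rightarrow> real)
    \<Rightarrow> (nat \<times> nat) set \<Rightarrow> nat \<Rightarrow> nat \<Rightarrow> real" where
  "preact_const width conn \<theta> S 0 k = 0"
| "preact_const width conn \<theta> S (Suc 0) k = 0"
| "preact_const width conn \<theta> S (Suc (Suc l)) k =
     (\<Sum>k'\<in>{k'. k' < width (Suc l) \<and> conn (Suc (Suc l)) k k'}.
        \<theta> (W (Suc (Suc l)) k k') *
          (if (Suc l, k') \<in> S then preact_const width conn \<theta> S (Suc l) k' - \<theta> (B (Suc l) k') else 0))"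

lemma max_0_eq_if:
  fixes t :: real
  assumes "if P then 0 \<le> t else t \<le> 0"
  shows "max 0 t = (if P then t else 0)"
  using assms by (auto split: if_splits)

lemma preact_eq_affine_on_pattern:
  assumes pattern: "\<And>l k. 1 \<le> l \<Longrightarrow> l < j \<Longrightarrow> k < width l \<Longrightarrow>
      if (l, k) \<in> S then 0 \<le> preact width conn \<theta> l k x - \<theta> (B l k)
      else preact width conn \<theta> l k x - \<theta> (B l k) \<le> 0"
    and "1 \<le> l" "l \<le> j"
  shows "preact width conn \<theta> l k x
    = preact_lin width conn \<theta> S l k \<bullet> x + preact_const width conn \<theta> S l k"
  using assms(2-)
proof (induction l arbitrary: k)
  case (Suc l)
  show ?case
  proof (cases l)
    case 0
    then show ?thesis by (simp add: inner_vec_def mult.commute)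
  next
    case (Suc m)
    let ?K = "{k'. k' < width l \<and> conn (Suc l) k k'}"
    let ?v = "\<lambda>k'. preact width conn \<theta> l k' x - \<theta> (B l k')"
    have sign: "if (l, k') \<in> S then 0 \<le> ?v k' else ?v k' \<le> 0" if "k' < width l" for k'
      using pattern[of l k'] Suc.prems that \<open>l = Suc m\<close> by simp
    have "preact width conn \<theta> (Suc l) k x
        = (\<Sum>k'\<in>?K. \<theta> (W (Suc l) k k') * (if (l, k') \<in> S then ?v k' else 0))"
      using max_0_eq_if[OF sign] by (simp add: \<open>l = Suc m\<close>)
    also have "\<dots> = (\<Sum>k'\<in>?K. \<theta> (W (Suc l) k k') *
        (if (l, k') \<in> S
         then preact_lin width conn \<theta> S l k' \<bullet> x + preact_const width conn \<theta> S l k' - \<theta> (B l k')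
         else 0))"
      using Suc.IH Suc.prems \<open>l = Suc m\<close> by (intro sum.cong) auto
    also have "\<dots> = preact_lin width conn \<theta> S (Suc l) k \<bullet> x + preact_const width conn \<theta> S (Suc l) k"
      unfolding \<open>l = Suc m\<close> preact_lin.simps preact_const.simps inner_sum_left
        sum.distrib[symmetric]
      by (intro sum.cong) (auto simp: algebra_simps)
    finally show ?thesis .
  qed
qed simp

lemma act_region_preact_affine:
  assumes "act_region width conn \<theta> (j - 1) R" "1 \<le> j"
  obtains S where "S \<subseteq> Sigma {..<j} (\<lambda>l. {..<width l})"
    "\<And>x. x \<in> R \<Longrightarrow> preact width conn \<theta> j k x
       = preact_lin width conn \<theta> S j k \<bullet> x + preact_const width conn \<theta> S j k"
proof -
  obtain a where a: "\<forall>l k. a l k \<in> {-1, 1}" and R: "R = {x. \<forall>l k. 1 \<le> l \<and> l \<le> j - 1 \<and> k < width l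
      \<longrightarrow> sgn (preact width conn \<theta> l k x - \<theta> (B l k)) = a l k}"
    using assms(1) unfolding act_region_def by blast
  define S where "S = {(l, k). l < j \<and> k < width l \<and> a l k = 1}"
  show thesis
  proof (rule that)
    show "S \<subseteq> Sigma {..<j} (\<lambda>l. {..<width l})" unfolding S_def by auto
    fix x assume "x \<in> R"
    then have "sgn (preact width conn \<theta> l k x - \<theta> (B l k)) = a l k"
      if "1 \<le> l" "l < j" "k < width l" for l k
      using that unfolding R by auto
    with a show "preact width conn \<theta> j k x
        = preact_lin width conn \<theta> S j k \<bullet> x + preact_const width conn \<theta> S j k"
      using assms(2) unfolding S_def
      by (intro preact_eq_affine_on_pattern[where j = j]) (force simp: sgn_if split: if_splits)+
  qed
qed

lemma level_set_inter_affine: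
  fixes w :: "real^'i"
  assumes affine: "\<And>x. x \<in> R \<Longrightarrow> f x = w \<bullet> x + c" and nondegenerate: "w = 0 \<Longrightarrow> b \<noteq> c"
  shows "{x. f x = b} \<inter> R = {} \<or> (\<exists>P. affine_hyperplane P \<and> {x. f x = b} \<inter> R = P \<inter> R)"
proof (cases "w = 0")
  case True
  then show ?thesis using affine nondegenerate by auto
next
  case False
  then have "affine_hyperplane {x. w \<bullet> x = b - c}" unfolding affine_hyperplane_def by blast
  moreover have "{x. f x = b} \<inter> R = {x. w \<bullet> x = b - c} \<inter> R" using affine by force
  ultimately show ?thesis by blast
qed

lemma affine_hyperplane_Hz_layer1:
  assumes "\<theta> (W1 k i) \<noteq> 0"
  shows "affine_hyperplane (Hz width conn \<theta> 1 k)"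
  unfolding affine_hyperplane_def Hz_def
proof (intro exI conjI)
  show "(\<chi> i. \<theta> (W1 k i)) \<noteq> 0" using assms by (metis vec_lambda_beta zero_index)
  show "{x. preact width conn \<theta> 1 k x = \<theta> (B 1 k)} = {x. (\<chi> i. \<theta> (W1 k i)) \<bullet> x = \<theta> (B 1 k)}"
    by (simp add: inner_vec_def mult.commute)
qed

lemma measurable_coordinate_PiM:
  "(\<lambda>\<theta>. \<theta> p) \<in> borel_measurable (Pi\<^sub>M I (\<lambda>_. lborel :: real measure))"
proof (cases "p \<in> I")
  case True
  then show ?thesis by (rule measurable_component_singleton[where M = "\<lambda>_. lborel", simplified])
next
  case False
  then have "\<theta> p = undefined" if "\<theta> \<in> space (Pi\<^sub>M I (\<lambda>_. lborel))" for \<theta> :: "'a \<Rightarrow> real"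
    using that by (auto simp: space_PiM PiE_def extensional_def)
  then show ?thesis by (subst measurable_cong[where g = "\<lambda>_. undefined"]) auto
qed

lemma preact_const_measurable:
  "(\<lambda>\<theta>. preact_const width conn \<theta> S l k) \<in> borel_measurable (Pi\<^sub>M I (\<lambda>_. lborel))"
proof (induction l arbitrary: k)
  case (Suc l)
  show ?case
  proof (cases l)
    case (Suc m)
    have "(\<lambda>\<theta>. if (l, k') \<in> S then preact_const width conn \<theta> S l k' - \<theta> (B l k') else 0)
        \<in> borel_measurable (Pi\<^sub>M I (\<lambda>_. lborel))" for k'
      using Suc.IH by (cases "(l, k') \<in> S") (auto intro!: borel_measurable_diff measurable_coordinate_PiM)
    then show ?thesis
      using \<open>l = Suc m\<close> by (auto intro!: borel_measurable_sum borel_measurable_times measurable_coordinate_PiM)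
  qed simp
qed simp

lemma preact_const_fun_upd_bias:
  "l \<le> m \<Longrightarrow> preact_const width conn (\<theta>(B m k' := y)) S l k = preact_const width conn \<theta> S l k"
proof (induction l arbitrary: k)
  case (Suc l)
  then show ?case by (cases l) (auto intro!: sum.cong)
qed simp

lemma null_sets_PiM_coordinate_graph:
  fixes c :: "('a \<Rightarrow> real) \<Rightarrow> real"
  assumes "finite I" "p \<in> I" and c: "c \<in> borel_measurable (Pi\<^sub>M I (\<lambda>_. lborel))"
    and c_indep: "\<And>\<theta> y. c (\<theta>(p := y)) = c \<theta>"
  shows "{\<theta> \<in> space (Pi\<^sub>M I (\<lambda>_. lborel)). \<theta> p = c \<theta>} \<in> null_sets (Pi\<^sub>M I (\<lambda>_. lborel))"
proof -
  let ?M = "Pi\<^sub>M I (\<lambda>_. lborel :: real measure)"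
  let ?A = "{\<theta> \<in> space ?M. \<theta> p = c \<theta>}"
  interpret product_sigma_finite "\<lambda>_. lborel :: real measure" by standard
  have A: "?A \<in> sets ?M"
    using measurable_coordinate_PiM[of p I] c by measurable
  have "emeasure ?M ?A = (\<integral>\<^sup>+ \<theta>. indicator ?A \<theta> \<partial>?M)"
    using A by simp
  also have "\<dots> = (\<integral>\<^sup>+ \<theta>. (\<integral>\<^sup>+ y. indicator ?A (\<theta>(p := y)) \<partial>lborel) \<partial>Pi\<^sub>M (I - {p}) (\<lambda>_. lborel))"
    using product_nn_integral_insert[of "I - {p}" p "indicator ?A"] A assms(1,2)
    by (simp add: insert_absorb)
  also have "\<dots> \<le> (\<integral>\<^sup>+ \<theta>. (\<integral>\<^sup>+ y. indicator {c \<theta>} y \<partial>lborel) \<partial>Pi\<^sub>M (I - {p}) (\<lambda>_. lborel))"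
    by (intro nn_integral_mono) (auto simp: indicator_def c_indep)
  also have "\<dots> = 0" by simp
  finally show ?thesis using A by (simp add: null_sets_def)
qed

lemma finite_params: "finite (params TYPE('i::finite) d width conn)"
proof -
  have "params TYPE('i) d width conn \<subseteq>
      (\<lambda>(k, i). W1 k i) ` ({..<width 1} \<times> UNIV)
    \<union> (\<lambda>(l, k, k'). W l k k') ` Sigma {..d} (\<lambda>l. {..<width l} \<times> {..<width (l - 1)})
    \<union> (\<lambda>(l, k). B l k) ` Sigma {..d} (\<lambda>l. {..<width l})"
    unfolding params_def by (auto simp: image_iff)
  then show ?thesis by (rule finite_subset) (intro finite_UnI finite_imageI finite_SigmaI; simp)
qed

text \<open>The weight \<open>W1 k undefined\<close> stands for an arbitrary input coordinate: a first-layer weight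
  vector is nonzero as soon as one entry is.\<close>

definition exceptional_params :: "'i::finite itself \<Rightarrow> nat \<Rightarrow> (nat \<Rightarrow> nat)
    \<Rightarrow> (nat \<Rightarrow> nat \<Rightarrow> nat \<Rightarrow> bool) \<Rightarrow> ('i param \<Rightarrow> real) set" where
  "exceptional_params _ d width conn =
     (\<Union>k \<in> {k. 1 \<le> d \<and> k < width 1}. {\<theta>. \<theta> (W1 k undefined) = 0})
   \<union> (\<Union>j \<in> {2..d}. \<Union>k \<in> {..<width j}. \<Union>S \<in> Pow (Sigma {..<j} (\<lambda>l. {..<width l})).
        {\<theta>. \<theta> (B j k) = preact_const width conn \<theta> S j k})"

lemma exceptional_params_null:
  fixes d :: nat and width :: "nat \<Rightarrow> nat" and conn :: "nat \<Rightarrow> nat \<Rightarrow> nat \<Rightarrow> bool"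
  defines "M \<equiv> Pi\<^sub>M (params TYPE('i::finite) d width conn) (\<lambda>_. lborel :: real measure)"
  shows "space M \<inter> exceptional_params TYPE('i) d width conn \<in> null_sets M"
  unfolding exceptional_params_def Int_Un_distrib Int_UN_distrib
proof (intro null_sets.Un null_sets_UN' ballI)
  fix k assume "k \<in> {k. 1 \<le> d \<and> k < width 1}"
  then have "W1 k undefined \<in> params TYPE('i) d width conn" by (auto simp: params_def)
  from null_sets_PiM_coordinate_graph[OF finite_params this, of "\<lambda>_. 0"]
  show "space M \<inter> {\<theta>. \<theta> (W1 k undefined) = 0} \<in> null_sets M"
    by (simp add: M_def Int_def)
next
  fix j k S assume "j \<in> {2..d}" "k \<in> {..<width j}"
  then have "B j k \<in> params TYPE('i) d width conn" by (auto simp: params_def)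
  from null_sets_PiM_coordinate_graph[OF finite_params this]
  show "space M \<inter> {\<theta>. \<theta> (B j k) = preact_const width conn \<theta> S j k} \<in> null_sets M"
    by (simp add: M_def Int_def preact_const_measurable preact_const_fun_upd_bias)
qed (auto intro: countable_finite finite_SigmaI)

theorem lemma4:
  fixes d :: nat and width :: "nat \<Rightarrow> nat" and conn :: "nat \<Rightarrow> nat \<Rightarrow> nat \<Rightarrow> bool"
  shows "\<exists>N \<in> null_sets (Pi\<^sub>M (params TYPE('i::finite) d width conn) (\<lambda>_. lborel)).
    \<forall>\<theta> \<in> space (Pi\<^sub>M (params TYPE('i) d width conn) (\<lambda>_. lborel)) - N.
      (1 \<le> d \<longrightarrow> (\<forall>k < width 1. affine_hyperplane (Hz width conn \<theta> 1 k)))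
    \<and> (\<forall>j. 2 \<le> j \<and> j \<le> d \<longrightarrow> (\<forall>k < width j. \<forall>R.
         act_region width conn \<theta> (j - 1) R \<longrightarrow>
           Hz width conn \<theta> j k \<inter> R = {} \<or>
           (\<exists>P. affine_hyperplane P \<and> Hz width conn \<theta> j k \<inter> R = P \<inter> R)))"
proof (intro bexI[OF _ exceptional_params_null] ballI conjI impI allI)
  fix \<theta> assume "\<theta> \<in> space (Pi\<^sub>M (params TYPE('i) d width conn) (\<lambda>_. lborel))
      - space (Pi\<^sub>M (params TYPE('i) d width conn) (\<lambda>_. lborel)) \<inter> exceptional_params TYPE('i) d width conn"
  then have generic: "\<theta> \<notin> exceptional_params TYPE('i) d width conn" by simp
  show "affine_hyperplane (Hz width conn \<theta> 1 k)" if "1 \<le> d" "k < width 1" for k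
    using generic that by (intro affine_hyperplane_Hz_layer1[where i = undefined])
      (auto simp: exceptional_params_def)
  fix j k R
  assume j: "2 \<le> j \<and> j \<le> d" and k: "k < width j" and R: "act_region width conn \<theta> (j - 1) R"
  obtain S where S: "S \<subseteq> Sigma {..<j} (\<lambda>l. {..<width l})"
    and affine: "\<And>x. x \<in> R \<Longrightarrow> preact width conn \<theta> j k x
       = preact_lin width conn \<theta> S j k \<bullet> x + preact_const width conn \<theta> S j k"
    using act_region_preact_affine[OF R] j by auto
  have bias_generic: "\<theta> (B j k) \<noteq> preact_const width conn \<theta> S j k"
    using generic j k S by (auto simp: exceptional_params_def)
  show "Hz width conn \<theta> j k \<inter> R = {} \<or>
      (\<exists>P. affine_hyperplane P \<and> Hz width conn \<theta> j k \<inter> R = P \<inter> R)"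
    unfolding Hz_def
    by (rule level_set_inter_affine[where f = "preact width conn \<theta> j k", OF affine bias_generic])
qed

end
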